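(* Let $\epsilon_1>0$, $n\ge1$, let $u$ be a utility function on contexts of sensitivity $\Delta u\le1$ (context population size or overlap with a fixed starting context, $-\infty$ on non-matching contexts), and let $C_V$ be a starting context with $f_M(D_{C_V},V)=\mathrm{true}$. Consider the Depth-First Search Sampling algorithm: initialize a stack containing $C_V$ and $\mathrm{Visited}=\emptyset$; while $|\mathrm{Visited}|\le n$ and the stack is nonempty: let $C$ be the top of the stack, add $C$ to $\mathrm{Visited}$, let $\mathrm{Ch}$ be the set of contexts connected to $C$ that are matching for $V$ and not in $\mathrm{Visited}$; if $\mathrm{Ch}=\emptyset$ pop the stack, otherwise push $\mathrm{Exp}^{\epsilon_1}_u(D,\mathrm{Ch})$ onto the stack. Finally output $\mathrm{Exp}^{\epsilon_1}_u(D,\mathrm{Visited})$. Then this algorithm satisfies $((2n+2)\epsilon_1,\ COE_M(\cdot,V))$-Output Constrained Differential Privacy.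
   Context: Dataset $D$ over categorical attributes $A_1,\dots,A_m$ (domain sizes $|A_i|$, all possible values) and metric attribute $M$; $t=\sum_i|A_i|$. A context is a binary vector of length $t$, $c_{ij}=1$ meaning the $j$-th value of $A_i$ is selected; $D_C$ is the set of tuples of $D$ whose value in every $A_i$ is selected by $C$. Two contexts are connected if their Hamming distance is $1$. $f_M(D_C,V)$ is a deterministic test of whether record $V$ is an outlier in $D_C$ w.r.t. $M$; a context is matching if this is true. $COE_M(D,V)$ is the set of contexts $C$ with $V\in D_C$ and $f_M(D_C,V)=\mathrm{true}$. Sensitivity $\Delta u=\max|u(D_1,r)-u(D_2,r)|$ over neighboring datasets (differing by adding/removing one record) and outputs $r$. $\mathrm{Exp}^{\epsilon}_u(D,\mathcal R)$ outputs $r\in\mathcal R$ with probability $\exp(\epsilon u(D,r)/(2\Delta u))/\sum_{r'\in\mathcal R}\exp(\epsilon u(D,r')/(2\Delta u))$. $D_1,D_2$ are $f$-neighbors if they differ by adding/removing one record and $f(D_1)=f(D_2)\ne\emptyset$; $\mathcal M$ satisfies $(\epsilon,f)$-Output Constrained Differential Privacy if $\Pr[\mathcal M(D_1)\in S]\le e^\epsilon\Pr[\mathcal M(D_2)\in S]$ for all $f$-neighbors and all output sets $S$. *)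

theory Defs
  imports "HOL-Probability.Probability" "HOL-Library.Multiset"
begin

text \<open>A context is a binary vector of length t = sum of the domain sizes; we represent it
  by the set of selected positions (i,j), i < m, j < dsz i (the j-th value of attribute A_i).\<close>
type_synonym ctx = "(nat \<times> nat) set"

definition positions :: "nat \<Rightarrow> (nat \<Rightarrow> nat) \<Rightarrow> (nat \<times> nat) set" where
  "positions m dsz = {(i, j). i < m \<and> j < dsz i}"

definition contexts :: "nat \<Rightarrow> (nat \<Rightarrow> nat) \<Rightarrow> ctx set" where
  "contexts m dsz = Pow (positions m dsz)"

text \<open>Hamming distance 1 = symmetric difference of the selected positions has one element.\<close>
definition connected :: "ctx \<Rightarrow> ctx \<Rightarrow> bool" where
  "connected C C' \<longleftrightarrow> card ((C - C') \<union> (C' - C)) = 1"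

text \<open>D_C: tuples of D whose value in every attribute is selected by C.
  attr r i is the index of the value of record r in attribute A_i.\<close>
definition sub_data :: "nat \<Rightarrow> ('r \<Rightarrow> nat \<Rightarrow> nat) \<Rightarrow> 'r multiset \<Rightarrow> ctx \<Rightarrow> 'r multiset" where
  "sub_data m attr D C = filter_mset (\<lambda>r. \<forall>i<m. (i, attr r i) \<in> C) D"

text \<open>COE_M(D,V); the outlier test f_M is an arbitrary deterministic function f.\<close>
definition COE :: "nat \<Rightarrow> (nat \<Rightarrow> nat) \<Rightarrow> ('r \<Rightarrow> nat \<Rightarrow> nat) \<Rightarrow> ('r multiset \<Rightarrow> 'r \<Rightarrow> bool)
                   \<Rightarrow> 'r multiset \<Rightarrow> 'r \<Rightarrow> ctx set" where
  "COE m dsz attr f D V =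
     {C \<in> contexts m dsz. V \<in># sub_data m attr D C \<and> f (sub_data m attr D C) V}"

definition neighbors :: "'r multiset \<Rightarrow> 'r multiset \<Rightarrow> bool" where
  "neighbors D1 D2 \<longleftrightarrow> (\<exists>x. D2 = add_mset x D1 \<or> D1 = add_mset x D2)"

definition sensitivity_set :: "'o set \<Rightarrow> ('r multiset \<Rightarrow> 'o \<Rightarrow> real) \<Rightarrow> real set" where
  "sensitivity_set R u = {\<bar>u D1 r - u D2 r\<bar> | D1 D2 r. neighbors D1 D2 \<and> r \<in> R}"

definition sensitivity :: "'o set \<Rightarrow> ('r multiset \<Rightarrow> 'o \<Rightarrow> real) \<Rightarrow> real" where
  "sensitivity R u = Sup (sensitivity_set R u)"

definition exp_mech :: "real \<Rightarrow> real \<Rightarrow> ('d \<Rightarrow> 'o \<Rightarrow> real) \<Rightarrow> 'd \<Rightarrow> 'o set \<Rightarrow> 'o pmf" where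
  "exp_mech \<epsilon> \<Delta> u D R = embed_pmf (\<lambda>r. if r \<in> R
       then exp (\<epsilon> * u D r / (2 * \<Delta>)) / (\<Sum>r'\<in>R. exp (\<epsilon> * u D r' / (2 * \<Delta>))) else 0)"

definition f_neighbors :: "('d multiset \<Rightarrow> 'c set) \<Rightarrow> 'd multiset \<Rightarrow> 'd multiset \<Rightarrow> bool" where
  "f_neighbors f D1 D2 \<longleftrightarrow> neighbors D1 D2 \<and> f D1 = f D2 \<and> f D1 \<noteq> {}"

text \<open>(eps,f)-OCDP, for a mechanism defined on the input domain described by Dom.\<close>
definition ocdp_on :: "('d multiset \<Rightarrow> bool) \<Rightarrow> real \<Rightarrow> ('d multiset \<Rightarrow> 'c set)
                        \<Rightarrow> ('d multiset \<Rightarrow> 'o pmf) \<Rightarrow> bool" where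
  "ocdp_on Dom \<epsilon> f M \<longleftrightarrow> (\<forall>D1 D2. f_neighbors f D1 D2 \<and> Dom D1 \<and> Dom D2 \<longrightarrow>
      (\<forall>S. measure_pmf.prob (M D1) S \<le> exp \<epsilon> * measure_pmf.prob (M D2) S))"

text \<open>One iteration of the DFS loop body. State = (stack, Visited); head of list = top.\<close>
definition dfs_step :: "(ctx \<Rightarrow> bool) \<Rightarrow> (ctx set \<Rightarrow> ctx pmf) \<Rightarrow> ctx list \<times> ctx set
                        \<Rightarrow> (ctx list \<times> ctx set) pmf" where
  "dfs_step match sel st = (case st of
      ([], Vis) \<Rightarrow> return_pmf st
    | (C # S, Vis) \<Rightarrow>
        (let Vis' = insert C Vis;
             Ch = {C'. connected C C' \<and> match C' \<and> C' \<notin> Vis'}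
         in if Ch = {} then return_pmf (S, Vis')
            else map_pmf (\<lambda>c. (c # C # S, Vis')) (sel Ch)))"

text \<open>The while loop (condition |Visited| \<le> n and stack nonempty), run with a fuel bound.\<close>
fun dfs_loop :: "nat \<Rightarrow> nat \<Rightarrow> (ctx \<Rightarrow> bool) \<Rightarrow> (ctx set \<Rightarrow> ctx pmf) \<Rightarrow> ctx list \<times> ctx set
                  \<Rightarrow> (ctx list \<times> ctx set) pmf" where
  "dfs_loop n 0 match sel st = return_pmf st"
| "dfs_loop n (Suc k) match sel st =
     (if card (snd st) \<le> n \<and> fst st \<noteq> []
      then bind_pmf (dfs_step match sel st) (dfs_loop n k match sel)
      else return_pmf st)"

text \<open>Depth-First Search Sampling. The fuel 2 * (number of contexts) + 2 exceeds the
  number of loop iterations the algorithm can ever perform, so the loop always terminates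
  via its own condition.\<close>
definition dfs_sampling :: "real \<Rightarrow> ('r multiset \<Rightarrow> ctx \<Rightarrow> real) \<Rightarrow> nat \<Rightarrow> (nat \<Rightarrow> nat)
      \<Rightarrow> ('r \<Rightarrow> nat \<Rightarrow> nat) \<Rightarrow> ('r multiset \<Rightarrow> 'r \<Rightarrow> bool) \<Rightarrow> nat \<Rightarrow> 'r \<Rightarrow> ctx
      \<Rightarrow> 'r multiset \<Rightarrow> ctx pmf" where
  "dfs_sampling \<epsilon>1 u m dsz attr f n V CV D =
     (let \<Delta> = sensitivity (contexts m dsz) u;
          match = (\<lambda>C. C \<in> COE m dsz attr f D V);
          sel = exp_mech \<epsilon>1 \<Delta> u D;
          fuel = 2 * card (contexts m dsz) + 2
      in bind_pmf (dfs_loop n fuel match sel ([CV], {})) (\<lambda>st. sel (snd st)))"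

end

theory Submission
  imports Defs
begin

text \<open>Every run of the loop draws from the exponential mechanism only when it pushes a child
  that has not been seen before. So the contexts visited or lying on top of the stack form a set
  that starts as the singleton of the starting context, grows by one with every such draw and has
  at most n + 2 elements. Hence a run makes at most n + 1 draws followed by the final one, each of
  which changes the probability of any outcome by a factor of at most exp \<epsilon>1 when the data set
  is replaced by an f-neighbour (which has the same matching contexts, so the loop branches the same
  way). Composing these factors along every run bounds the ratio of output probabilities by
  exp ((n + 2) \<epsilon>1).\<close>

lemma pmf_bind_le_mult:
  fixes a b :: real
  assumes "a \<ge> 0" "b \<ge> 0"
    and p_le: "\<And>x. pmf p1 x \<le> a * pmf p2 x"
    and f_le: "\<And>x. x \<in> set_pmf p1 \<Longrightarrow> pmf (f1 x) y \<le> b * pmf (f2 x) y"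
  shows "pmf (bind_pmf p1 f1) y \<le> a * b * pmf (bind_pmf p2 f2) y"
proof -
  have "ennreal (pmf (bind_pmf p1 f1) y)
      = (\<integral>\<^sup>+x. ennreal (pmf p1 x) * ennreal (pmf (f1 x) y) \<partial>count_space UNIV)"
    by (simp add: ennreal_pmf_bind nn_integral_measure_pmf)
  also have "\<dots> \<le> (\<integral>\<^sup>+x. ennreal (a * b) * (ennreal (pmf p2 x) * ennreal (pmf (f2 x) y)) \<partial>count_space UNIV)"
  proof (rule nn_integral_mono)
    fix x
    show "ennreal (pmf p1 x) * ennreal (pmf (f1 x) y)
        \<le> ennreal (a * b) * (ennreal (pmf p2 x) * ennreal (pmf (f2 x) y))"
    proof (cases "x \<in> set_pmf p1")
      case True
      have "pmf p1 x * pmf (f1 x) y \<le> (a * pmf p2 x) * (b * pmf (f2 x) y)"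
        by (rule mult_mono) (use p_le f_le[OF True] assms(1,2) in auto)
      then show ?thesis
        by (simp add: ennreal_mult'[symmetric] mult_ac assms(1,2) ennreal_leI)
    next
      case False
      then show ?thesis by (simp add: set_pmf_eq)
    qed
  qed
  also have "\<dots> = ennreal (a * b * pmf (bind_pmf p2 f2) y)"
    by (simp add: nn_integral_cmult ennreal_pmf_bind nn_integral_measure_pmf ennreal_mult' assms(1,2))
  finally show ?thesis
    using assms(1,2) by (simp add: ennreal_le_iff)
qed

lemma measure_pmf_prob_le_mult:
  fixes c :: real
  assumes "c \<ge> 0" and "\<And>x. pmf p x \<le> c * pmf q x"
  shows "measure_pmf.prob p S \<le> c * measure_pmf.prob q S"
proof -
  have "emeasure (measure_pmf p) S = (\<integral>\<^sup>+ x. ennreal (pmf p x) \<partial>count_space S)"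
    by (simp add: nn_integral_pmf)
  also have "\<dots> \<le> (\<integral>\<^sup>+ x. ennreal c * ennreal (pmf q x) \<partial>count_space S)"
    by (rule nn_integral_mono) (use assms in \<open>simp add: ennreal_mult'[symmetric]\<close>)
  also have "\<dots> = ennreal (c * measure_pmf.prob q S)"
    by (simp add: nn_integral_cmult nn_integral_pmf measure_pmf.emeasure_eq_measure ennreal_mult' assms(1))
  finally show ?thesis
    by (simp add: measure_pmf.emeasure_eq_measure assms(1))
qed

lemma pmf_exp_mech:
  assumes "finite R" "R \<noteq> {}"
  shows "pmf (exp_mech e d u D R) x = (if x \<in> R
      then exp (e * u D x / (2 * d)) / (\<Sum>r\<in>R. exp (e * u D r / (2 * d))) else 0)"
proof -
  define w where "w r = exp (e * u D r / (2 * d))" for r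
  let ?g = "\<lambda>r. if r \<in> R then w r / sum w R else 0"
  have pos: "sum w R > 0"
    unfolding w_def using assms by (intro sum_pos) auto
  have "(\<integral>\<^sup>+x. ennreal (?g x) \<partial>count_space UNIV) = (\<Sum>x\<in>R. ennreal (?g x))"
    using assms(1) by (intro nn_integral_count_space') auto
  also have "\<dots> = ennreal (\<Sum>x\<in>R. ?g x)"
    using pos by (intro sum_ennreal) (auto simp: w_def)
  also have "(\<Sum>x\<in>R. ?g x) = 1"
    using pos by (simp add: sum_divide_distrib[symmetric])
  finally have "pmf (embed_pmf ?g) x = ?g x"
    using pos by (intro pmf_embed_pmf) (auto simp: w_def)
  then show ?thesis
    unfolding exp_mech_def w_def .
qed

lemma set_pmf_exp_mech_subset:
  assumes "finite R" "R \<noteq> {}"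
  shows "set_pmf (exp_mech e d u D R) \<subseteq> R"
  by (auto simp: set_pmf_eq pmf_exp_mech[OF assms])

lemma exp_mech_weight_le:
  fixes e d a b :: real
  assumes "e \<ge> 0" "\<bar>a - b\<bar> \<le> d"
  shows "exp (e * a / (2 * d)) \<le> exp (e / 2) * exp (e * b / (2 * d))"
proof -
  have "e * a / (2 * d) \<le> e / 2 + e * b / (2 * d)"
  proof (cases "d = 0")
    case True
    then show ?thesis using assms(1) by simp
  next
    case False
    then have "d > 0" using assms(2) by linarith
    have "e * (a - b) \<le> e * d"
      using assms by (intro mult_left_mono) auto
    then show ?thesis using \<open>d > 0\<close> by (simp add: field_simps)
  qed
  then show ?thesis by (simp add: exp_add[symmetric])
qed

lemma pmf_exp_mech_le:
  fixes e d :: real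
  assumes "e \<ge> 0" "finite R" and diff: "\<And>r. r \<in> R \<Longrightarrow> \<bar>u D1 r - u D2 r\<bar> \<le> d"
  shows "pmf (exp_mech e d u D1 R) x \<le> exp e * pmf (exp_mech e d u D2 R) x"
proof -
  consider "R = {}" | "R \<noteq> {}" "x \<notin> R" | "R \<noteq> {}" "x \<in> R"
    by blast
  then show ?thesis
  proof cases
    case 1
    then have "exp_mech e d u D1 R = exp_mech e d u D2 R"
      unfolding exp_mech_def by simp
    moreover have "pmf p x \<le> exp e * pmf p x" for p :: "'a pmf"
      using mult_right_mono[of 1 "exp e" "pmf p x"] assms(1) by simp
    ultimately show ?thesis by simp
  next
    case 2
    then show ?thesis by (simp add: pmf_exp_mech[OF assms(2)])
  next
    case 3
    define w1 where "w1 r = exp (e * u D1 r / (2 * d))" for r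
    define w2 where "w2 r = exp (e * u D2 r / (2 * d))" for r
    have w12: "w1 x \<le> exp (e / 2) * w2 x"
      unfolding w1_def w2_def using assms(1) diff[OF \<open>x \<in> R\<close>] by (rule exp_mech_weight_le)
    have "sum w2 R \<le> exp (e / 2) * sum w1 R"
      unfolding sum_distrib_left w1_def w2_def
      using assms(1) diff by (intro sum_mono exp_mech_weight_le) (auto simp: abs_minus_commute)
    then have sum21: "sum w2 R / exp (e / 2) \<le> sum w1 R"
      by (simp add: divide_le_eq mult.commute)
    have "sum w2 R > 0"
      unfolding w2_def using assms(2) \<open>R \<noteq> {}\<close> by (intro sum_pos) auto
    have "w1 x / sum w1 R \<le> (exp (e / 2) * w2 x) / (sum w2 R / exp (e / 2))"
      using w12 sum21 \<open>sum w2 R > 0\<close> by (intro frac_le) (auto simp: w2_def)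
    also have "\<dots> = exp e * (w2 x / sum w2 R)"
      by (simp add: exp_add[symmetric])
    finally show ?thesis
      using 3 by (simp add: pmf_exp_mech[OF assms(2)] w1_def w2_def)
  qed
qed

definition dfs_reached :: "ctx list \<times> ctx set \<Rightarrow> ctx set" where
  "dfs_reached st = set (take 1 (fst st)) \<union> snd st"

lemma pmf_bind_dfs_step_le:
  fixes e B :: real
  assumes "e \<ge> 0" "finite P"
    and sel_le: "\<And>R x. R \<subseteq> P \<Longrightarrow> pmf (sel1 R) x \<le> exp e * pmf (sel2 R) x"
    and sel_support: "\<And>R. R \<subseteq> P \<Longrightarrow> R \<noteq> {} \<Longrightarrow> set_pmf (sel1 R) \<subseteq> R"
    and match_P: "\<And>C. match C \<Longrightarrow> C \<in> P"
    and st_P: "insert C (set S \<union> Vis) \<subseteq> P"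
    and cont: "\<And>S'. set S' \<subseteq> P \<Longrightarrow> pmf (g1 (S', insert C Vis)) y
      \<le> exp (e * (B - card (dfs_reached (S', insert C Vis)))) * pmf (g2 (S', insert C Vis)) y"
  shows "pmf (bind_pmf (dfs_step match sel1 (C # S, Vis)) g1) y
    \<le> exp (e * (B - card (dfs_reached (C # S, Vis)))) * pmf (bind_pmf (dfs_step match sel2 (C # S, Vis)) g2) y"
proof -
  define Vis' where "Vis' = insert C Vis"
  define Ch where "Ch = {C'. connected C C' \<and> match C' \<and> C' \<notin> Vis'}"
  have step: "dfs_step match sel (C # S, Vis)
      = (if Ch = {} then return_pmf (S, Vis') else map_pmf (\<lambda>c. (c # C # S, Vis')) (sel Ch))" for sel
    unfolding dfs_step_def Ch_def Vis'_def by (simp add: Let_def)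
  have reached: "dfs_reached (C # S, Vis) = Vis'"
    unfolding dfs_reached_def Vis'_def by simp
  have reached_P: "dfs_reached (S', Vis') \<subseteq> P" if "set S' \<subseteq> P" for S'
    using that st_P set_take_subset[of 1 S'] unfolding dfs_reached_def Vis'_def by auto
  show ?thesis
  proof (cases "Ch = {}")
    case True
    have "card Vis' \<le> card (dfs_reached (S, Vis'))"
      using reached_P[of S] st_P \<open>finite P\<close>
      by (intro card_mono) (auto intro: finite_subset simp: dfs_reached_def)
    then have "exp (e * (B - card (dfs_reached (S, Vis')))) \<le> exp (e * (B - card Vis'))"
      using assms(1) by (simp add: mult_left_mono)
    then show ?thesis
      using True cont[of S] st_P unfolding step reached Vis'_def[symmetric]
      by (auto simp: bind_return_pmf elim!: order_trans intro!: mult_right_mono)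
  next
    case False
    have "Ch \<subseteq> P" using match_P unfolding Ch_def by auto
    have "pmf (bind_pmf (sel1 Ch) (\<lambda>c. g1 (c # C # S, Vis'))) y
      \<le> exp e * exp (e * (B - (card Vis' + 1))) * pmf (bind_pmf (sel2 Ch) (\<lambda>c. g2 (c # C # S, Vis'))) y"
    proof (rule pmf_bind_le_mult)
      show "pmf (sel1 Ch) x \<le> exp e * pmf (sel2 Ch) x" for x
        using sel_le[OF \<open>Ch \<subseteq> P\<close>] .
      fix c assume "c \<in> set_pmf (sel1 Ch)"
      then have "c \<in> P" "c \<notin> Vis'"
        using sel_support[OF \<open>Ch \<subseteq> P\<close> False] \<open>Ch \<subseteq> P\<close> unfolding Ch_def by auto
      moreover have "finite Vis'"
        using st_P \<open>finite P\<close> unfolding Vis'_def by (auto intro: finite_subset)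
      ultimately have "card (dfs_reached (c # C # S, Vis')) = card Vis' + 1"
        unfolding dfs_reached_def by simp
      then show "pmf (g1 (c # C # S, Vis')) y \<le> exp (e * (B - (card Vis' + 1))) * pmf (g2 (c # C # S, Vis')) y"
        using cont[of "c # C # S"] \<open>c \<in> P\<close> st_P unfolding Vis'_def by simp
    qed auto
    also have "exp e * exp (e * (B - (card Vis' + 1))) = exp (e * (B - card Vis'))"
      by (simp add: exp_add[symmetric] algebra_simps)
    finally show ?thesis
      using False unfolding step reached by (simp add: bind_map_pmf)
  qed
qed

lemma pmf_dfs_loop_select_le:
  fixes e :: real
  assumes "e \<ge> 0" "finite P"
    and sel_le: "\<And>R x. R \<subseteq> P \<Longrightarrow> pmf (sel1 R) x \<le> exp e * pmf (sel2 R) x"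
    and sel_support: "\<And>R. R \<subseteq> P \<Longrightarrow> R \<noteq> {} \<Longrightarrow> set_pmf (sel1 R) \<subseteq> R"
    and match_P: "\<And>C. match C \<Longrightarrow> C \<in> P"
    and "set (fst st) \<union> snd st \<subseteq> P" "card (snd st) \<le> n + 1"
  shows "pmf (bind_pmf (dfs_loop n k match sel1 st) (\<lambda>s. sel1 (snd s))) y
    \<le> exp (e * (real n + 3 - card (dfs_reached st)))
       * pmf (bind_pmf (dfs_loop n k match sel2 st) (\<lambda>s. sel2 (snd s))) y"
proof -
  have final: "pmf (sel1 (snd st)) y \<le> exp (e * (real n + 3 - card (dfs_reached st))) * pmf (sel2 (snd st)) y"
    if "snd st \<subseteq> P" "card (snd st) \<le> n + 1" for st
  proof -
    have "card (dfs_reached st) \<le> card (set (take 1 (fst st))) + card (snd st)"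
      unfolding dfs_reached_def by (rule card_Un_le)
    moreover have "card (set (take 1 (fst st))) \<le> 1"
      using card_length[of "take 1 (fst st)"] by simp
    ultimately have "e * 1 \<le> e * (real n + 3 - card (dfs_reached st))"
      using that(2) assms(1) by (intro mult_left_mono) auto
    then have "exp e \<le> exp (e * (real n + 3 - card (dfs_reached st)))"
      by simp
    then show ?thesis
      using sel_le[OF that(1), of y] by (meson order_trans mult_right_mono pmf_nonneg)
  qed
  show ?thesis
    using assms(6,7)
  proof (induction k arbitrary: st)
    case 0
    then show ?case using final by (simp add: bind_return_pmf)
  next
    case (Suc k)
    show ?case
    proof (cases "card (snd st) \<le> n \<and> fst st \<noteq> []")
      case False
      then show ?thesis using final Suc.prems by (auto simp: bind_return_pmf)
    next
      case True
      then obtain C S Vis where st: "st = (C # S, Vis)" and "card Vis \<le> n"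
        by (metis list.exhaust prod.collapse)
      have "finite Vis" using Suc.prems(1) \<open>finite P\<close> st by (auto intro: finite_subset)
      have "pmf (bind_pmf (dfs_step match sel1 (C # S, Vis))
              (\<lambda>s. bind_pmf (dfs_loop n k match sel1 s) (\<lambda>s. sel1 (snd s)))) y
          \<le> exp (e * (real n + 3 - card (dfs_reached (C # S, Vis))))
            * pmf (bind_pmf (dfs_step match sel2 (C # S, Vis))
              (\<lambda>s. bind_pmf (dfs_loop n k match sel2 s) (\<lambda>s. sel2 (snd s)))) y"
      proof (rule pmf_bind_dfs_step_le[OF assms(1-5)])
        show "insert C (set S \<union> Vis) \<subseteq> P" using Suc.prems(1) st by auto
        have "card (insert C Vis) \<le> n + 1"
          using \<open>card Vis \<le> n\<close> \<open>finite Vis\<close> by (simp add: card_insert_if)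
        then show "pmf (bind_pmf (dfs_loop n k match sel1 (S', insert C Vis)) (\<lambda>s. sel1 (snd s))) y
            \<le> exp (e * (real n + 3 - card (dfs_reached (S', insert C Vis))))
              * pmf (bind_pmf (dfs_loop n k match sel2 (S', insert C Vis)) (\<lambda>s. sel2 (snd s))) y"
          if "set S' \<subseteq> P" for S'
          using Suc.IH[of "(S', insert C Vis)"] that Suc.prems(1) st by auto
      qed
      then show ?thesis
        using True unfolding st by (simp add: bind_assoc_pmf)
    qed
  qed
qed

lemma finite_contexts: "finite (contexts m dsz)"
proof -
  have "positions m dsz \<subseteq> (SIGMA i:{..<m}. {..<dsz i})"
    unfolding positions_def by auto
  then show ?thesis
    unfolding contexts_def by (auto intro: finite_subset)
qed

lemma abs_diff_le_sensitivity:
  assumes "bdd_above (sensitivity_set R u)" "neighbors D1 D2" "r \<in> R"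
  shows "\<bar>u D1 r - u D2 r\<bar> \<le> sensitivity R u"
  unfolding sensitivity_def using assms by (intro cSup_upper) (auto simp: sensitivity_set_def)

lemma pmf_dfs_sampling_le:
  assumes "e \<ge> 0" "bdd_above (sensitivity_set (contexts m dsz) u)" "neighbors D1 D2"
    and COE_eq: "COE m dsz attr f D1 V = COE m dsz attr f D2 V"
    and "CV \<in> COE m dsz attr f D1 V"
  shows "pmf (dfs_sampling e u m dsz attr f n V CV D1) y
    \<le> exp (e * (real n + 2)) * pmf (dfs_sampling e u m dsz attr f n V CV D2) y"
proof -
  define \<Delta> where "\<Delta> = sensitivity (contexts m dsz) u"
  define match where "match = (\<lambda>C. C \<in> COE m dsz attr f D2 V)"
  have "pmf (bind_pmf (dfs_loop n k match (exp_mech e \<Delta> u D1) ([CV], {})) (\<lambda>s. exp_mech e \<Delta> u D1 (snd s))) y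
      \<le> exp (e * (real n + 3 - card (dfs_reached ([CV], {}))))
        * pmf (bind_pmf (dfs_loop n k match (exp_mech e \<Delta> u D2) ([CV], {})) (\<lambda>s. exp_mech e \<Delta> u D2 (snd s))) y"
    for k
  proof (rule pmf_dfs_loop_select_le[OF assms(1) finite_contexts])
    show "pmf (exp_mech e \<Delta> u D1 R) x \<le> exp e * pmf (exp_mech e \<Delta> u D2 R) x"
      if "R \<subseteq> contexts m dsz" for R x
      using that assms(1-3) finite_subset[OF that finite_contexts] unfolding \<Delta>_def
      by (intro pmf_exp_mech_le abs_diff_le_sensitivity) auto
    show "set_pmf (exp_mech e \<Delta> u D1 R) \<subseteq> R" if "R \<subseteq> contexts m dsz" "R \<noteq> {}" for R
      using that finite_subset[OF that(1) finite_contexts] by (intro set_pmf_exp_mech_subset)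
  qed (use assms(4,5) in \<open>auto simp: match_def COE_def\<close>)
  moreover have "card (dfs_reached ([CV], {})) = 1"
    by (simp add: dfs_reached_def)
  ultimately have "pmf (bind_pmf (dfs_loop n k match (exp_mech e \<Delta> u D1) ([CV], {})) (\<lambda>s. exp_mech e \<Delta> u D1 (snd s))) y
      \<le> exp (e * (real n + 2))
        * pmf (bind_pmf (dfs_loop n k match (exp_mech e \<Delta> u D2) ([CV], {})) (\<lambda>s. exp_mech e \<Delta> u D2 (snd s))) y"
    for k
    by (simp add: algebra_simps)
  then show ?thesis
    unfolding dfs_sampling_def Let_def COE_eq \<Delta>_def[symmetric] match_def[symmetric] .
qed

text \<open>The exponential mechanism is calibrated to the sensitivity itself.\<close>

theorem theorem8:
  fixes m :: nat and dsz :: "nat \<Rightarrow> nat" and attr :: "'r \<Rightarrow> nat \<Rightarrow> nat"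
    and f :: "'r multiset \<Rightarrow> 'r \<Rightarrow> bool" and u :: "'r multiset \<Rightarrow> ctx \<Rightarrow> real"
    and V :: 'r and CV :: ctx and n :: nat and \<epsilon>1 :: real
  assumes "\<epsilon>1 > 0" and "n \<ge> 1"
    and "\<forall>r i. i < m \<longrightarrow> attr r i < dsz i"
    and "bdd_above (sensitivity_set (contexts m dsz) u)"
    and "sensitivity (contexts m dsz) u \<le> 1"
    and "CV \<in> contexts m dsz"
  shows "ocdp_on (\<lambda>D. CV \<in> COE m dsz attr f D V) ((2 * real n + 2) * \<epsilon>1)
           (\<lambda>D. COE m dsz attr f D V) (dfs_sampling \<epsilon>1 u m dsz attr f n V CV)"
  unfolding ocdp_on_def f_neighbors_def
proof (intro allI impI)
  fix D1 D2 S
  assume H: "(neighbors D1 D2 \<and> COE m dsz attr f D1 V = COE m dsz attr f D2 V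
      \<and> COE m dsz attr f D1 V \<noteq> {}) \<and> CV \<in> COE m dsz attr f D1 V \<and> CV \<in> COE m dsz attr f D2 V"
  have "pmf (dfs_sampling \<epsilon>1 u m dsz attr f n V CV D1) y
      \<le> exp ((2 * real n + 2) * \<epsilon>1) * pmf (dfs_sampling \<epsilon>1 u m dsz attr f n V CV D2) y" for y
  proof -
    have "pmf (dfs_sampling \<epsilon>1 u m dsz attr f n V CV D1) y
        \<le> exp (\<epsilon>1 * (real n + 2)) * pmf (dfs_sampling \<epsilon>1 u m dsz attr f n V CV D2) y"
      using H assms(1,4) by (intro pmf_dfs_sampling_le) auto
    also have "\<dots> \<le> exp ((2 * real n + 2) * \<epsilon>1) * pmf (dfs_sampling \<epsilon>1 u m dsz attr f n V CV D2) y"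
      using assms(1) by (intro mult_right_mono) (auto simp: algebra_simps)
    finally show ?thesis .
  qed
  then show "measure_pmf.prob (dfs_sampling \<epsilon>1 u m dsz attr f n V CV D1) S
      \<le> exp ((2 * real n + 2) * \<epsilon>1) * measure_pmf.prob (dfs_sampling \<epsilon>1 u m dsz attr f n V CV D2) S"
    by (intro measure_pmf_prob_le_mult) auto
qed

end
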